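(* Let $\mathcal A$ be a unital $C^*$-algebra, let $p,q\in\mathcal A$ be projections and let $a\in\mathcal A$ be invertible up to $(p,q)$. (a) There is a projection $q'\in\mathcal A$ with $q'\sim q$ such that $a$ is invertible up to $(p,q')$ and $q'a(1-p)=0$. (b) There is a projection $p'\in\mathcal A$ with $p'\sim p$ such that $a$ is invertible up to $(p',q)$ and $(1-q)ap'=0$.
   Context: For projections $p,q$ in a unital $C^*$-algebra $\mathcal A$, $p\sim q$ (Murray–von Neumann equivalence) means there is $v\in\mathcal A$ with $vv^*=p$, $v^*v=q$. For $a\in\mathcal A$ and projections $p,q\in\mathcal A$, $a$ is invertible up to $(p,q)$ if there is $b\in\mathcal A$ with $b=(1-p)b(1-q)$, $(1-q)a(1-p)b=1-q$ and $b(1-q)a(1-p)=1-p$. *)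

theory Defs
  imports "HOL-Analysis.Analysis"
begin

class cstar_algebra = banach + real_normed_algebra_1 +
  fixes scaleC :: "complex \<Rightarrow> 'a \<Rightarrow> 'a"
    and adj :: "'a \<Rightarrow> 'a"
  assumes scaleR_scaleC: "scaleR r x = scaleC (complex_of_real r) x"
    and scaleC_add_left: "scaleC (c + d) x = scaleC c x + scaleC d x"
    and scaleC_add_right: "scaleC c (x + y) = scaleC c x + scaleC c y"
    and scaleC_scaleC: "scaleC c (scaleC d x) = scaleC (c * d) x"
    and scaleC_one: "scaleC 1 x = x"
    and scaleC_mult_left: "scaleC c (x * y) = scaleC c x * y"
    and scaleC_mult_right: "scaleC c (x * y) = x * scaleC c y"
    and norm_scaleC: "norm (scaleC c x) = cmod c * norm x"
    and adj_adj: "adj (adj x) = x"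
    and adj_add: "adj (x + y) = adj x + adj y"
    and adj_mult: "adj (x * y) = adj y * adj x"
    and adj_scaleC: "adj (scaleC c x) = scaleC (cnj c) (adj x)"
    and cstar_identity: "norm (adj x * x) = (norm x)\<^sup>2"

definition is_projection :: "'a::cstar_algebra \<Rightarrow> bool" where
  "is_projection p \<longleftrightarrow> adj p = p \<and> p * p = p"

definition mvn_equiv :: "'a::cstar_algebra \<Rightarrow> 'a \<Rightarrow> bool" where
  "mvn_equiv p q \<longleftrightarrow> (\<exists>v. v * adj v = p \<and> adj v * v = q)"

definition invertible_upto :: "'a::cstar_algebra \<Rightarrow> 'a \<Rightarrow> 'a \<Rightarrow> bool" where
  "invertible_upto a p q \<longleftrightarrow>
     (\<exists>b. b = (1 - p) * b * (1 - q) \<and>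
          (1 - q) * a * (1 - p) * b = 1 - q \<and>
          b * (1 - q) * a * (1 - p) = 1 - p)"

end

theory Submission
  imports Defs "HOL-Computational_Algebra.Formal_Power_Series"
begin

text \<open>Let b invert a up to (p, q). Then f = 1 - b a is an idempotent with p f = p and f p = f,
  and (1 - q) a f = 0. The range projection g of f is Murray--von Neumann equivalent to p: with
  n = f - p, the element 1 + (n + n*)^2 is invertible and commutes with p, and if r is a
  self-adjoint square root of its inverse given by a power series, then g = f r^2 f* and
  v = f r p satisfy v v* = g and v* v = p. Now (1 - q) a g = 0 and (1 - g) b inverts a up to
  (g, q), which proves (b). Part (a) is (b) for a*, because a is
  invertible up to (p, q) exactly when a* is invertible up to (q, p).

  The functional calculus needed for r is built by hand: h + i c is invertible for self-adjoint h
  and real c \<noteq> 0 (a shift by i t reduces this to a Neumann series), the Cayley transform of h gives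
  norm (1 - 2 (1 + h^2)^-1) \<le> 1, and the binomial series of sqrt (1 - w) converges absolutely for
  norm w \<le> 1 because the absolute values of the coefficients (1/2 choose k) sum to 2.\<close>

definition of_complex :: "complex \<Rightarrow> 'a::cstar_algebra" where
  "of_complex c = scaleC c 1"

lemma scaleC_conv_of_complex: "scaleC c x = of_complex c * x"
  unfolding of_complex_def by (metis scaleC_mult_left mult_1_left)

lemma of_complex_commute: "of_complex c * x = x * of_complex c"
  unfolding of_complex_def by (metis scaleC_mult_left scaleC_mult_right mult_1_left mult_1_right)

lemma of_complex_mult: "of_complex (c * d) = of_complex c * of_complex d"
  by (metis of_complex_def scaleC_conv_of_complex scaleC_scaleC)

lemma of_complex_add: "of_complex (c + d) = of_complex c + of_complex d"
  by (simp add: of_complex_def scaleC_add_left)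

lemma of_complex_of_real: "of_complex (complex_of_real r) = of_real r"
  by (metis of_complex_def scaleR_scaleC scaleR_conv_of_real mult_1_right)

lemma of_complex_1 [simp]: "of_complex 1 = 1"
  using of_complex_of_real[of 1] by simp

lemma of_complex_minus: "of_complex (- c) = - of_complex c"
  by (metis add.right_inverse add_eq_0_iff of_complex_add of_complex_of_real of_real_0)

lemma norm_of_complex: "norm (of_complex c :: 'a::cstar_algebra) = cmod c"
  by (simp add: of_complex_def norm_scaleC)

lemma adj_1 [simp]: "adj 1 = (1::'a::cstar_algebra)"
  by (metis adj_adj adj_mult mult_1_left mult_1_right)

lemma adj_0 [simp]: "adj 0 = (0::'a::cstar_algebra)"
  by (metis adj_add add_cancel_right_right add_0)

lemma adj_minus: "adj (- x) = - adj (x::'a::cstar_algebra)"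
  by (metis adj_add adj_0 add.right_inverse add_eq_0_iff)

lemma adj_diff: "adj (x - y) = adj x - adj (y::'a::cstar_algebra)"
  by (metis adj_add adj_minus diff_conv_add_uminus)

lemma adj_of_complex: "adj (of_complex c) = of_complex (cnj c)"
  by (simp add: of_complex_def adj_scaleC)

lemma adj_scaleR: "adj (scaleR r x) = scaleR r (adj (x::'a::cstar_algebra))"
  by (simp add: scaleR_scaleC adj_scaleC)

lemma norm_adj: "norm (adj x) = norm (x::'a::cstar_algebra)"
proof -
  have "norm y \<le> norm (adj y)" for y :: 'a
  proof (cases "y = 0")
    case False
    have "(norm y)\<^sup>2 \<le> norm (adj y) * norm y"
      by (metis cstar_identity norm_mult_ineq)
    then show ?thesis using False by (simp add: power2_eq_square)
  qed simp
  from this[of x] this[of "adj x"] show ?thesis by (simp add: adj_adj)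
qed

lemma bounded_linear_adj: "bounded_linear (adj::'a::cstar_algebra \<Rightarrow> 'a)"
  by (rule bounded_linear_intro[where K=1]) (simp_all add: adj_add adj_scaleR norm_adj)

lemma norm_eq_1_if_isometry:
  fixes u :: "'a::cstar_algebra"
  assumes "adj u * u = 1"
  shows "norm u = 1"
proof -
  have "(norm u)\<^sup>2 = 1" by (metis assms cstar_identity norm_one)
  then show ?thesis using norm_ge_zero[of u] by (auto simp: power2_eq_1_iff)
qed

lemma commute_with_inverse:
  fixes x y t :: "'a::monoid_mult"
  assumes "x * y = 1" and "y * x = 1" and "t * x = x * t"
  shows "t * y = y * t"
proof -
  have "t * y = y * x * t * y" using assms(2) by simp
  also have "\<dots> = y * t * (x * y)" by (metis assms(3) mult.assoc)
  finally show ?thesis using assms(1) by simp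
qed

lemma invertible_one_minus:
  fixes z :: "'a::{banach, real_normed_algebra_1}"
  assumes "norm z < 1"
  shows "\<exists>y. (1 - z) * y = 1 \<and> y * (1 - z) = 1"
proof -
  have summable: "summable (\<lambda>n. z ^ n)"
    by (rule summable_comparison_test[where g="\<lambda>n. norm z ^ n"])
       (auto intro: norm_power_ineq simp: summable_geometric assms)
  define y where "y = (\<Sum>n. z ^ n)"
  have y_head: "y = 1 + (\<Sum>n. z ^ Suc n)"
    using suminf_split_head[OF summable] by (simp add: y_def)
  have "z * y = (\<Sum>n. z ^ Suc n)"
    unfolding y_def using suminf_mult[OF summable, of z] by simp
  moreover have "y * z = (\<Sum>n. z ^ Suc n)"
    unfolding y_def using suminf_mult2[OF summable, of z] by (simp add: power_commutes)
  ultimately have "(1 - z) * y = 1" and "y * (1 - z) = 1"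
    using y_head by (simp_all add: algebra_simps)
  then show ?thesis by blast
qed

lemma invertible_add_of_complex:
  fixes k :: "'a::cstar_algebra"
  assumes "norm k < cmod \<mu>"
  shows "\<exists>y. (k + of_complex \<mu>) * y = 1 \<and> y * (k + of_complex \<mu>) = 1"
proof -
  have "\<mu> \<noteq> 0" using assms by auto
  define z where "z = - (of_complex (1 / \<mu>) * k)"
  have "norm z \<le> cmod (1 / \<mu>) * norm k"
    unfolding z_def norm_minus_cancel using norm_mult_ineq[of "of_complex (1 / \<mu>)" k]
    by (simp add: norm_of_complex)
  also have "\<dots> < 1" using assms \<open>\<mu> \<noteq> 0\<close> by (simp add: norm_divide field_simps)
  finally obtain y where y: "(1 - z) * y = 1" "y * (1 - z) = 1"
    using invertible_one_minus by blast
  have \<mu>_inverse: "of_complex \<mu> * of_complex (1 / \<mu>) = (1::'a)"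
    "of_complex (1 / \<mu>) * of_complex \<mu> = (1::'a)"
    using \<open>\<mu> \<noteq> 0\<close> by (simp_all flip: of_complex_mult)
  have "of_complex \<mu> * (1 - z) = of_complex \<mu> + (of_complex \<mu> * of_complex (1 / \<mu>)) * k"
    unfolding z_def by (simp add: algebra_simps)
  then have factor: "k + of_complex \<mu> = of_complex \<mu> * (1 - z)"
    by (simp add: \<mu>_inverse)
  have "(k + of_complex \<mu>) * (y * of_complex (1 / \<mu>)) = of_complex \<mu> * ((1 - z) * y) * of_complex (1 / \<mu>)"
    unfolding factor by (simp only: mult.assoc)
  moreover have "(y * of_complex (1 / \<mu>)) * (k + of_complex \<mu>) = y * (of_complex (1 / \<mu>) * of_complex \<mu>) * (1 - z)"
    unfolding factor by (simp only: mult.assoc)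
  ultimately show ?thesis using y \<mu>_inverse by auto
qed

lemma invertible_selfadjoint_add_imaginary:
  fixes h :: "'a::cstar_algebra" and c :: real
  assumes "adj h = h" and "c \<noteq> 0"
  shows "\<exists>y. (h + of_complex (\<i> * of_real c)) * y = 1 \<and> y * (h + of_complex (\<i> * of_real c)) = 1"
proof -
  define H where "H = (norm h)\<^sup>2"
  txt \<open>This choice of t makes c t = H, whence (norm k)^2 \<le> H + t^2 < (c + t)^2.\<close>
  define t where "t = H / c"
  define k where "k = h - of_complex (\<i> * of_real t)"
  have "adj k * k = h * h - of_complex (\<i> * of_real t) * of_complex (\<i> * of_real t)"
    unfolding k_def
    by (simp add: adj_diff assms(1) adj_of_complex of_complex_minus algebra_simps of_complex_commute[of _ h])
  also have "of_complex (\<i> * of_real t) * of_complex (\<i> * of_real t) = (of_real (- t\<^sup>2) :: 'a)"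
    by (simp add: power2_eq_square algebra_simps flip: of_complex_mult of_complex_of_real)
  finally have "(norm k)\<^sup>2 = norm (h * h + of_real (t\<^sup>2))"
    by (metis cstar_identity diff_minus_eq_add of_real_minus)
  also have "\<dots> \<le> norm (h * h) + norm (of_real (t\<^sup>2) :: 'a)"
    by (rule norm_triangle_ineq)
  also have "\<dots> \<le> H + t\<^sup>2"
    using norm_mult_ineq[of h h] by (simp add: H_def power2_eq_square del: of_real_mult)
  also have "\<dots> < (c + t)\<^sup>2"
  proof -
    have "c * t = H" using \<open>c \<noteq> 0\<close> by (simp add: t_def)
    then have "(c + t)\<^sup>2 = c\<^sup>2 + 2 * H + t\<^sup>2" by (simp add: power2_sum mult.assoc)
    moreover have "c\<^sup>2 > 0" using \<open>c \<noteq> 0\<close> by simp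
    moreover have "H \<ge> 0" by (simp add: H_def)
    ultimately show ?thesis by linarith
  qed
  finally have "norm k < \<bar>c + t\<bar>"
    by (metis abs_ge_zero power2_abs power_less_imp_less_base)
  moreover have "h + of_complex (\<i> * of_real c) = k + of_complex (\<i> * of_real (c + t))"
    unfolding k_def by (simp add: algebra_simps of_complex_add)
  moreover have "cmod (\<i> * of_real (c + t)) = \<bar>c + t\<bar>"
    by (simp add: norm_mult del: of_real_add)
  ultimately show ?thesis
    using invertible_add_of_complex[of k "\<i> * of_real (c + t)"] by metis
qed

lemma norm_adj_mult_inverse:
  fixes x y :: "'a::cstar_algebra"
  assumes "x * y = 1" and "y * x = 1" and "adj x * x = x * adj x"
  shows "norm (adj x * y) = 1"
proof (rule norm_eq_1_if_isometry)
  have "adj (adj x * y) * (adj x * y) = adj y * (x * adj x) * y"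
    by (simp add: adj_mult adj_adj mult.assoc)
  also have "\<dots> = adj (x * y) * (x * y)"
    by (simp only: adj_mult mult.assoc flip: assms(3))
  finally show "adj (adj x * y) * (adj x * y) = 1" by (simp add: assms(1))
qed

lemma inverse_one_plus_square:
  fixes h :: "'a::cstar_algebra"
  assumes "adj h = h"
  obtains d where "(1 + h * h) * d = 1" "d * (1 + h * h) = 1" "adj d = d" "norm (1 - 2 * d) \<le> 1"
proof -
  define j :: 'a where "j = of_complex \<i>"
  have jj: "j * j = -1"
    unfolding j_def by (simp flip: of_complex_mult of_complex_1 of_complex_minus)
  have jh: "j * h = h * j" unfolding j_def by (rule of_complex_commute)
  define A where "A = h + j"
  have adj_A: "adj A = h - j"
    unfolding A_def j_def by (simp add: adj_add assms adj_of_complex of_complex_minus)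
  obtain A' where A': "A * A' = 1" "A' * A = 1"
    using invertible_selfadjoint_add_imaginary[OF assms, of 1] by (auto simp: A_def j_def)
  have adj_A': "adj A * adj A' = 1" "adj A' * adj A = 1"
    using A' by (metis adj_mult adj_1)+
  have AA: "A * adj A = 1 + h * h" "adj A * A = 1 + h * h"
    unfolding adj_A by (simp_all add: A_def algebra_simps jh jj)
  define d where "d = adj A' * A'"
  have "(1 + h * h) * d = A * (adj A * adj A') * A'"
    unfolding d_def AA(1)[symmetric] by (simp only: mult.assoc)
  then have d_right: "(1 + h * h) * d = 1" by (simp add: adj_A'(1) A'(1))
  have "d * (1 + h * h) = adj A' * (A' * A) * adj A"
    unfolding d_def AA(1)[symmetric] by (simp only: mult.assoc)
  then have d_left: "d * (1 + h * h) = 1" by (simp add: adj_A'(2) A'(2))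
  have "adj d = d" unfolding d_def by (simp add: adj_mult adj_adj)
  have "h * d = d * h"
    by (rule commute_with_inverse[OF d_right d_left]) (simp add: algebra_simps)
  then have Ad: "A * d = d * A"
    unfolding A_def j_def by (simp add: algebra_simps of_complex_commute)
  txt \<open>The Cayley transform u of h is an isometry, and u + u* = 2 (1 - 2 d).\<close>
  define u where "u = adj A * A'"
  have "norm u = 1"
    unfolding u_def using norm_adj_mult_inverse[OF A'] AA by simp
  then have "norm (adj u) = 1" by (simp add: norm_adj)
  have "u = adj A * (adj A * adj A') * A'" by (simp add: u_def adj_A'(1))
  then have "u = adj A * adj A * d" by (simp only: d_def mult.assoc)
  moreover have "adj u = A * A * d"
  proof -
    have "adj u = adj A' * (A' * A) * A" by (simp add: u_def adj_mult adj_adj A'(2))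
    also have "\<dots> = d * A * A" by (simp only: d_def mult.assoc)
    finally show ?thesis by (metis Ad mult.assoc)
  qed
  ultimately have "u + adj u = (adj A * adj A + A * A) * d" by (simp add: distrib_right)
  also have "adj A * adj A + A * A = 2 * (1 + h * h) - 4"
    unfolding adj_A by (simp add: A_def algebra_simps jh jj mult_2)
  also have "(2 * (1 + h * h) - 4) * d = 2 * ((1 + h * h) * d) - 4 * d"
    by (simp only: left_diff_distrib mult.assoc)
  also have "\<dots> = 2 * (1 - 2 * d)"
    unfolding d_right by (simp add: algebra_simps)
  finally have "2 * norm (1 - 2 * d) = norm (u + adj u)"
    by (metis norm_scaleR real_norm_def scaleR_conv_of_real of_real_numeral abs_numeral)
  also have "\<dots> \<le> 2"
    using norm_triangle_ineq[of u "adj u"] \<open>norm u = 1\<close> \<open>norm (adj u) = 1\<close> by simp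
  finally show ?thesis using that d_right d_left \<open>adj d = d\<close> by simp
qed

lemma abs_gbinomial_half_Suc:
  assumes "k \<ge> 1"
  shows "Suc k * \<bar>(1/2::real) gchoose Suc k\<bar> = (k - 1/2) * \<bar>(1/2::real) gchoose k\<bar>"
proof -
  have "\<bar>Suc k * ((1/2::real) gchoose Suc k)\<bar> = \<bar>(1/2 - k) * ((1/2::real) gchoose k)\<bar>"
    using gbinomial_mult_1[of "1/2::real" k] by (simp add: algebra_simps)
  moreover have "\<bar>1/2 - real k\<bar> = k - 1/2" using assms by simp
  ultimately show ?thesis by (simp add: abs_mult)
qed

lemma sum_abs_gbinomial_half:
  "(\<Sum>i<Suc n. \<bar>(1/2::real) gchoose i\<bar>) = 2 - 2 * Suc n * \<bar>(1/2::real) gchoose Suc n\<bar>"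
proof (induction n)
  case (Suc n)
  then show ?case
    using abs_gbinomial_half_Suc[of "Suc n"] by (simp add: algebra_simps)
qed simp

lemma summable_abs_gbinomial_half: "summable (\<lambda>k. \<bar>(1/2::real) gchoose k\<bar>)"
proof (rule bounded_imp_summable[where B=2])
  show "(\<Sum>k\<le>n. \<bar>(1/2::real) gchoose k\<bar>) \<le> 2" for n
    using sum_abs_gbinomial_half[of n] by (simp add: lessThan_Suc_atMost)
qed simp

lemma gbinomial_half_convolution:
  "(\<Sum>i\<le>k. ((1/2::real) gchoose i) * ((1/2) gchoose (k - i))) = (if k \<le> 1 then 1 else 0)"
proof -
  have "(\<Sum>i\<le>k. ((1/2::real) gchoose i) * ((1/2) gchoose (k - i))) = ((1/2 + 1/2::real) gchoose k)"
    using gbinomial_Vandermonde[of "1/2::real" "1/2" k] by (simp add: atLeast0AtMost)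
  also have "\<dots> = of_nat (1 choose k)" by (subst binomial_gbinomial) simp
  finally show ?thesis by (cases k) (auto simp: binomial_eq_0)
qed

lemma sqrt_one_minus:
  fixes w :: "'a::cstar_algebra"
  assumes "adj w = w" and "norm w \<le> 1"
  obtains s where "adj s = s" "s * s = 1 - w" "\<And>t. t * w = w * t \<Longrightarrow> t * s = s * t"
proof -
  define f where "f k = ((1/2::real) gchoose k) *\<^sub>R (-w) ^ k" for k
  have "norm (f k) \<le> \<bar>(1/2::real) gchoose k\<bar>" for k
  proof -
    have "norm ((-w) ^ k) \<le> 1"
      using norm_power_ineq[of "-w" k] power_le_one[of "norm w" k] assms(2) by simp
    then show ?thesis unfolding f_def by (simp add: mult_left_le)
  qed
  then have summable_norm: "summable (\<lambda>k. norm (f k))"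
    by (intro summable_comparison_test[OF _ summable_abs_gbinomial_half]) auto
  then have summable: "summable f" by (rule summable_norm_cancel)
  define s where "s = suminf f"
  have "s * s = (\<Sum>k. \<Sum>i\<le>k. f i * f (k - i))"
    unfolding s_def by (rule Cauchy_product[OF summable_norm summable_norm])
  also have "\<dots> = (\<Sum>k. (if k \<le> 1 then 1 else 0) *\<^sub>R (-w) ^ k)"
  proof (rule suminf_cong)
    fix k
    have "(\<Sum>i\<le>k. f i * f (k - i)) = (\<Sum>i\<le>k. (((1/2::real) gchoose i) * ((1/2) gchoose (k - i))) *\<^sub>R (-w) ^ k)"
      unfolding f_def by (intro sum.cong refl) (simp flip: power_add)
    then show "(\<Sum>i\<le>k. f i * f (k - i)) = (if k \<le> 1 then 1 else 0) *\<^sub>R (-w) ^ k"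
      by (simp only: gbinomial_half_convolution flip: scaleR_sum_left)
  qed
  also have "\<dots> = (\<Sum>k\<in>{0,1}. (if k \<le> 1 then 1 else 0) *\<^sub>R (-w) ^ k)"
    by (rule suminf_finite) auto
  finally have "s * s = 1 - w" by simp
  have "adj ((-w) ^ k) = (-w) ^ k" for k
  proof (induction k)
    case (Suc k)
    then show ?case by (simp only: power_Suc adj_mult adj_minus assms(1) power_commutes)
  qed simp
  then have "adj s = s"
    unfolding s_def f_def bounded_linear.suminf[OF bounded_linear_adj summable[unfolded f_def]]
    by (simp add: adj_scaleR)
  moreover have "t * s = s * t" if "t * w = w * t" for t
  proof -
    have "t * (-w) = (-w) * t" using that by simp
    then have "t * f k = f k * t" for k
      unfolding f_def by (simp add: power_commuting_commutes)
    then have "(\<Sum>k. t * f k) = (\<Sum>k. f k * t)" by simp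
    then show ?thesis
      unfolding s_def suminf_mult[OF summable] suminf_mult2[OF summable] .
  qed
  ultimately show ?thesis using that \<open>s * s = 1 - w\<close> by blast
qed

lemma inverse_sqrt_one_plus_square:
  fixes h :: "'a::cstar_algebra"
  assumes "adj h = h"
  obtains r where "adj r = r" "(1 + h * h) * (r * r) = 1" "r * r * (1 + h * h) = 1"
    "\<And>x. x * (1 + h * h) = (1 + h * h) * x \<Longrightarrow> x * r = r * x"
proof -
  obtain d where d: "(1 + h * h) * d = 1" "d * (1 + h * h) = 1" "adj d = d" "norm (1 - 2 * d) \<le> 1"
    using inverse_one_plus_square[OF assms] .
  have "adj (1 - 2 * d) = 1 - 2 * d"
    by (simp add: adj_diff adj_add d(3) mult_2)
  then obtain s where s: "adj s = s" "s * s = 1 - (1 - 2 * d)"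
    "\<And>t. t * (1 - 2 * d) = (1 - 2 * d) * t \<Longrightarrow> t * s = s * t"
    using sqrt_one_minus d(4) by blast
  define r where "r = (1 / sqrt 2) *\<^sub>R s"
  have "r * r = (1/2) *\<^sub>R (s * s)"
    unfolding r_def by simp
  also have "s * s = 2 *\<^sub>R d"
    using s(2) by (simp add: scaleR_2 mult_2)
  finally have "r * r = d" by simp
  moreover have "x * r = r * x" if "x * (1 + h * h) = (1 + h * h) * x" for x
  proof -
    have "x * d = d * x" using commute_with_inverse[OF d(1,2) that] .
    then have "x * (1 - 2 * d) = (1 - 2 * d) * x" by (simp add: algebra_simps mult_2)
    then show ?thesis unfolding r_def using s(3) by simp
  qed
  moreover have "adj r = r" unfolding r_def by (simp add: adj_scaleR s(1))
  ultimately show ?thesis using that d(1,2) by blast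
qed

lemma range_projection_equiv:
  fixes e f :: "'a::cstar_algebra"
  assumes "is_projection e" and "e * f = e" and "f * e = f"
  obtains g where "is_projection g" "g * f = f" "f * g = g" "mvn_equiv g e"
proof -
  have adj_e: "adj e = e" and ee: "e * e = e"
    using assms(1) by (auto simp: is_projection_def)
  define n where "n = f - e"
  define m where "m = adj n"
  have en: "e * n = 0" and ne: "n * e = n"
    unfolding n_def using assms ee by (simp_all add: algebra_simps)
  have me: "m * e = 0" and em: "e * m = m"
    unfolding m_def using en ne by (metis adj_e adj_mult adj_0)+
  have nn: "n * n = 0" by (metis en ne mult.assoc mult_zero_right)
  have mm: "m * m = 0" by (metis me em mult.assoc mult_zero_left)
  define C where "C = 1 + (n + m) * (n + m)"
  have h: "adj (n + m) = n + m" unfolding m_def by (simp add: adj_add adj_adj add.commute)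
  obtain r where r: "adj r = r" "C * (r * r) = 1" "r * r * C = 1"
    "\<And>x. x * C = C * x \<Longrightarrow> x * r = r * x"
    by (rule inverse_sqrt_one_plus_square[OF h, folded C_def]) (rule that)
  have adj_f: "adj f = e + m"
    unfolding m_def n_def by (simp add: adj_add adj_diff adj_e)
  have eC: "e * C = e + m * n"
    unfolding C_def by (simp add: algebra_simps en em nn mm flip: mult.assoc)
  have Ce: "C * e = e + m * n"
    unfolding C_def by (simp add: algebra_simps ne me ee nn mm mult.assoc)
  have ff: "adj f * f = e * C"
  proof -
    have "f = e + n" by (simp add: n_def)
    then show ?thesis unfolding adj_f eC by (simp add: algebra_simps ee en me)
  qed
  have fC: "adj f * f = C * e" using ff eC Ce by simp
  have er: "e * r = r * e" using r(4) eC Ce by simp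
  have Cr: "C * r = r * C" using r(4) by simp
  have e_adj_f: "e * adj f = adj f" by (metis assms(3) adj_e adj_mult)
  have "f * f = f" by (metis assms(2,3) mult.assoc)
  define g where "g = f * (r * r) * adj f"
  have "adj g = g" unfolding g_def by (simp add: adj_mult adj_adj r(1) mult.assoc)
  moreover have "g * g = g"
  proof -
    have "g * g = f * (r * r) * ((adj f * f) * (r * r)) * adj f" unfolding g_def by (simp add: mult.assoc)
    also have "(adj f * f) * (r * r) = e" unfolding ff by (simp add: mult.assoc r(2))
    finally show ?thesis unfolding g_def by (simp add: mult.assoc e_adj_f)
  qed
  moreover have "g * f = f"
  proof -
    have "g * f = f * (r * r * C) * e" unfolding g_def by (simp add: mult.assoc fC)
    then show ?thesis by (simp add: r(3) assms(3))
  qed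
  moreover have "f * g = g" unfolding g_def by (simp add: \<open>f * f = f\<close> flip: mult.assoc)
  moreover have "mvn_equiv g e"
    unfolding mvn_equiv_def
  proof (intro exI conjI)
    have adj_v: "adj (f * r * e) = e * r * adj f" by (simp add: adj_mult adj_e r(1) mult.assoc)
    have "f * r * e * (e * r * adj f) = f * (r * (e * e)) * r * adj f" by (simp only: mult.assoc)
    also have "\<dots> = f * (e * r) * r * adj f" by (simp only: ee er)
    also have "\<dots> = (f * e) * (r * r) * adj f" by (simp only: mult.assoc)
    finally show "f * r * e * adj (f * r * e) = g" by (simp only: adj_v assms(3) g_def)
    have "e * r * adj f * (f * r * e) = e * r * (adj f * f) * r * e" by (simp only: mult.assoc)
    also have "\<dots> = e * (r * C) * (e * r) * e" by (simp only: fC mult.assoc)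
    also have "\<dots> = e * (C * r) * (r * e) * e" by (simp only: Cr er)
    also have "\<dots> = e * (C * (r * r)) * (e * e)" by (simp only: mult.assoc)
    finally show "adj (f * r * e) * (f * r * e) = e" by (simp add: adj_v r(2) ee)
  qed
  ultimately show ?thesis using that by (simp add: is_projection_def)
qed

lemma invertible_upto_adj:
  fixes a p q :: "'a::cstar_algebra"
  assumes "adj p = p" and "adj q = q" and "invertible_upto a p q"
  shows "invertible_upto (adj a) q p"
proof -
  obtain b where b: "b = (1 - p) * b * (1 - q)" "(1 - q) * a * (1 - p) * b = 1 - q"
      "b * (1 - q) * a * (1 - p) = 1 - p"
    using assms(3) unfolding invertible_upto_def by blast
  have "adj b = (1 - q) * adj b * (1 - p)"
    "(1 - p) * adj a * (1 - q) * adj b = 1 - p"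
    "adj b * (1 - p) * adj a * (1 - q) = 1 - q"
    using arg_cong[OF b(1), of adj] arg_cong[OF b(3), of adj] arg_cong[OF b(2), of adj]
    by (simp_all add: adj_mult adj_diff assms(1,2) mult.assoc)
  then show ?thesis unfolding invertible_upto_def by blast
qed

lemma invertible_upto_kernel_projection:
  fixes a p q :: "'a::cstar_algebra"
  assumes "is_projection p" and "q * q = q" and "invertible_upto a p q"
  obtains p' where "is_projection p'" "mvn_equiv p' p" "invertible_upto a p' q" "(1 - q) * a * p' = 0"
proof -
  obtain b where b: "b = (1 - p) * b * (1 - q)" "(1 - q) * a * (1 - p) * b = 1 - q"
      "b * (1 - q) * a * (1 - p) = 1 - p"
    using assms(3) unfolding invertible_upto_def by blast
  have pp: "p * p = p" using assms(1) by (simp add: is_projection_def)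
  have P_idem: "(1 - p) * (1 - p) = 1 - p" and Q_idem: "(1 - q) * (1 - q) = 1 - q"
    using pp assms(2) by (simp_all add: algebra_simps)
  have "p * (1 - p) = 0" using pp by (simp add: algebra_simps)
  then have "p * b = 0" by (metis b(1) mult.assoc mult_zero_left)
  have bQ: "b * (1 - q) = b" by (metis b(1) Q_idem mult.assoc)
  have Pb: "(1 - p) * b = b" by (metis b(1) P_idem mult.assoc)
  have Qab: "(1 - q) * a * b = 1 - q" using b(2) Pb by (simp add: mult.assoc)
  have ba: "b * a * (1 - p) = 1 - p" using b(3) bQ by (simp add: mult.assoc)
  define f where "f = 1 - b * a"
  have "p * f = p" unfolding f_def using \<open>p * b = 0\<close> by (simp add: algebra_simps flip: mult.assoc)
  moreover have "f * p = f" unfolding f_def using ba by (simp add: algebra_simps)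
  ultimately obtain g where g: "is_projection g" "g * f = f" "f * g = g" "mvn_equiv g p"
    using range_projection_equiv[OF assms(1)] by blast
  have gg: "g * g = g" using g(1) by (simp add: is_projection_def)
  have "(1 - q) * a * f = (1 - q) * a - ((1 - q) * a * b) * a"
    unfolding f_def by (simp add: algebra_simps)
  then have "(1 - q) * a * f = 0" by (simp add: Qab)
  then have Qag: "(1 - q) * a * g = 0" by (metis g(3) mult.assoc mult_zero_left)
  have "invertible_upto a g q"
    unfolding invertible_upto_def
  proof (intro exI conjI)
    have G_idem: "(1 - g) * (1 - g) = 1 - g" using gg by (simp add: algebra_simps)
    show "(1 - g) * b = (1 - g) * ((1 - g) * b) * (1 - q)"
      by (simp add: G_idem bQ flip: mult.assoc) (simp add: mult.assoc bQ)
    have "(1 - q) * a * (1 - g) * ((1 - g) * b) = (1 - q) * a * ((1 - g) * (1 - g)) * b"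
      by (simp only: mult.assoc)
    also have "\<dots> = (1 - q) * a * b - (1 - q) * a * g * b"
      by (simp only: G_idem) (simp add: algebra_simps)
    finally show "(1 - q) * a * (1 - g) * ((1 - g) * b) = 1 - q" by (simp add: Qab Qag)
    have "(1 - g) * b * (1 - q) * a * (1 - g) = (1 - g) * (b * (1 - q)) * a * (1 - g)"
      by (simp only: mult.assoc)
    also have "\<dots> = (1 - g) * (1 - f) * (1 - g)"
      by (simp add: bQ f_def mult.assoc)
    also have "\<dots> = 1 - g" using g(2,3) gg by (simp add: algebra_simps)
    finally show "(1 - g) * b * (1 - q) * a * (1 - g) = 1 - g" .
  qed
  then show ?thesis using that g(1,4) Qag by blast
qed

theorem mainTheorem6:
  fixes a p q :: "'a::cstar_algebra"
  assumes "is_projection p" and "is_projection q" and "invertible_upto a p q"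
  shows "(\<exists>q'. is_projection q' \<and> mvn_equiv q' q \<and> invertible_upto a p q' \<and>
              q' * a * (1 - p) = 0)
       \<and> (\<exists>p'. is_projection p' \<and> mvn_equiv p' p \<and> invertible_upto a p' q \<and>
              (1 - q) * a * p' = 0)"
proof
  have p: "adj p = p" "p * p = p" and q: "adj q = q" "q * q = q"
    using assms(1,2) by (simp_all add: is_projection_def)
  show "\<exists>p'. is_projection p' \<and> mvn_equiv p' p \<and> invertible_upto a p' q \<and> (1 - q) * a * p' = 0"
    using invertible_upto_kernel_projection[OF assms(1) q(2) assms(3)] by blast
  obtain q' where q': "is_projection q'" "mvn_equiv q' q" "invertible_upto (adj a) q' p"
      "(1 - p) * adj a * q' = 0"
    using invertible_upto_kernel_projection[OF assms(2) p(2) invertible_upto_adj[OF p(1) q(1) assms(3)]] .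
  have "adj q' = q'" using q'(1) by (simp add: is_projection_def)
  then have "invertible_upto a p q'"
    using invertible_upto_adj[OF _ p(1) q'(3)] by (simp add: adj_adj)
  moreover have "q' * a * (1 - p) = 0"
    using arg_cong[OF q'(4), of adj] \<open>adj q' = q'\<close> p(1) by (simp add: adj_mult adj_diff adj_adj mult.assoc)
  ultimately show "\<exists>q'. is_projection q' \<and> mvn_equiv q' q \<and> invertible_upto a p q' \<and> q' * a * (1 - p) = 0"
    using q'(1,2) by blast
qed

end
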